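(* Let $N\ge 1$, $K\ge 2$, $M\in[0,N]$, and let $\mathbf p=(p_1,\dots,p_N)$ be a probability vector with $p_1\ge p_2\ge\dots\ge p_N$. For every caching scheme with uncoded placement (for any file size $F$) with cache size $M$, the average delivery rate $\bar R=\sum_{\mathbf d\in[N]^K}\big(\prod_{i=1}^K p_{d_i}\big)R(\mathbf d)$ satisfies $$\bar R\;\ge\;\min_{\mathbf a \text{ feasible}}\ \bar R_{\mathrm{lb}}(\mathbf a),$$ i.e. the optimal value of the optimization problem (P1): minimize $\bar R_{\mathrm{lb}}(\mathbf a)$ over all feasible placement vectors $\mathbf a$, is a lower bound on the average rate of every caching scheme with uncoded placement.
   Context: Notation: $[m]=\{1,\dots,m\}$; $\binom{m}{l}=0$ if $l>m$ or $m<0$. A demand vector $\mathbf d=(d_1,\dots,d_K)\in[N]^K$ (user $k$ requests file $d_k$) occurs with probability $\prod_{i=1}^K p_{d_i}$. For $\mathbf d$, let $\mathcal D(\mathbf d)\subseteq[N]$ be the set of distinct entries of $\mathbf d$. Placement vectors: a placement vector is $\mathbf a=(a_{n,l})_{n\in[N],\,0\le l\le K}$ of reals; it is feasible if (i) $a_{n,l}\ge 0$ for all $n,l$; (ii) $\sum_{l=0}^K\binom{K}{l}a_{n,l}=1$ for every $n\in[N]$; (iii) $\sum_{n=1}^N\sum_{l=1}^K\binom{K-1}{l-1}a_{n,l}\le M$. Lower-bound function: for nonempty $\mathcal D\subseteq[N]$, $R_{\mathrm{lb}}(\mathcal D;\mathbf a)=\max_{\pi}\sum_{l=0}^{K-1}\sum_{i=1}^{|\mathcal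 D|}\binom{K-i}{l}a_{\pi(i),l}$, the maximum over all bijections $\pi:[|\mathcal D|]\to\mathcal D$; and $\bar R_{\mathrm{lb}}(\mathbf a)=\sum_{\mathbf d\in[N]^K}\big(\prod_{i=1}^K p_{d_i}\big)R_{\mathrm{lb}}(\mathcal D(\mathbf d);\mathbf a)$. Caching scheme with uncoded placement: there are $N$ independent files $W_1,\dots,W_N$, each uniformly distributed on $\{0,1\}^F$, and $K$ users. In the placement phase (before demands are known) each user $k$ stores a cache content $Z_k$ consisting of a subset of the bits of the files (no coding), of total size at most $MF$ bits. In the delivery phase, for each demand vector $\mathbf d$ the server broadcasts a message $X_{\mathbf d}$ (a function of $W_1,\dots,W_N$) of $R(\mathbf d)F$ bits to all users, such that for every $k$, $W_{d_k}$ is a function of $(X_{\mathbf d},Z_k)$. *)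

theory Defs
  imports Complex_Main
begin

text \<open>Files are indexed by 1..N, users by 1..K, bits of a file by 0..F-1.
  A realisation of the library is W :: nat => nat => bool (W n j = bit j of file n),
  normalised to False outside the index range.\<close>

definition file_space :: "nat \<Rightarrow> nat \<Rightarrow> (nat \<Rightarrow> nat \<Rightarrow> bool) set" where
  "file_space N F = {W. \<forall>n j. (n \<notin> {1..N} \<or> F \<le> j) \<longrightarrow> W n j = False}"

definition demands :: "nat \<Rightarrow> nat \<Rightarrow> (nat \<Rightarrow> nat) set" where
  "demands N K = {d. (\<forall>k\<in>{1..K}. d k \<in> {1..N}) \<and> (\<forall>k. k \<notin> {1..K} \<longrightarrow> d k = 0)}"

definition demand_prob :: "(nat \<Rightarrow> real) \<Rightarrow> nat \<Rightarrow> (nat \<Rightarrow> nat) \<Rightarrow> real" where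
  "demand_prob p K d = (\<Prod>i\<in>{1..K}. p (d i))"

definition distinct_demands :: "nat \<Rightarrow> (nat \<Rightarrow> nat) \<Rightarrow> nat set" where
  "distinct_demands K d = d ` {1..K}"

definition cache_content :: "(nat \<times> nat) set \<Rightarrow> (nat \<Rightarrow> nat \<Rightarrow> bool) \<Rightarrow> (nat \<times> nat \<Rightarrow> bool)" where
  "cache_content S W = (\<lambda>(n, j). if (n, j) \<in> S then W n j else False)"

text \<open>A caching scheme with uncoded placement: S k is the set of bits (file, position)
  stored by user k, X d is the broadcast encoder for demand d, producing L d bits.\<close>
definition uncoded_scheme ::
  "nat \<Rightarrow> nat \<Rightarrow> real \<Rightarrow> nat \<Rightarrow> (nat \<Rightarrow> (nat \<times> nat) set)
   \<Rightarrow> ((nat \<Rightarrow> nat) \<Rightarrow> (nat \<Rightarrow> nat \<Rightarrow> bool) \<Rightarrow> bool list) \<Rightarrow> ((nat \<Rightarrow> nat) \<Rightarrow> nat) \<Rightarrow> bool" where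
  "uncoded_scheme N K M F S X L \<longleftrightarrow>
     (\<forall>k\<in>{1..K}. S k \<subseteq> {1..N} \<times> {0..<F} \<and> real (card (S k)) \<le> M * real F) \<and>
     (\<forall>d\<in>demands N K.
        (\<forall>W\<in>file_space N F. length (X d W) = L d) \<and>
        (\<forall>k\<in>{1..K}. \<exists>g. \<forall>W\<in>file_space N F.
            g (X d W) (cache_content (S k) W) = map (W (d k)) [0..<F]))"

definition avg_rate ::
  "nat \<Rightarrow> nat \<Rightarrow> (nat \<Rightarrow> real) \<Rightarrow> nat \<Rightarrow> ((nat \<Rightarrow> nat) \<Rightarrow> nat) \<Rightarrow> real" where
  "avg_rate N K p F L = (\<Sum>d\<in>demands N K. demand_prob p K d * (real (L d) / real F))"

definition feasible_placement :: "nat \<Rightarrow> nat \<Rightarrow> real \<Rightarrow> (nat \<Rightarrow> nat \<Rightarrow> real) \<Rightarrow> bool" where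
  "feasible_placement N K M a \<longleftrightarrow>
     (\<forall>n\<in>{1..N}. \<forall>l\<in>{0..K}. a n l \<ge> 0) \<and>
     (\<forall>n\<in>{1..N}. (\<Sum>l=0..K. real (K choose l) * a n l) = 1) \<and>
     (\<Sum>n=1..N. \<Sum>l=1..K. real ((K - 1) choose (l - 1)) * a n l) \<le> M"

definition R_lb :: "nat \<Rightarrow> nat set \<Rightarrow> (nat \<Rightarrow> nat \<Rightarrow> real) \<Rightarrow> real" where
  "R_lb K D a = Max {(\<Sum>l=0..K-1. \<Sum>i=1..card D. real ((K - i) choose l) * a (\<pi> i) l)
                      | \<pi>. bij_betw \<pi> {1..card D} D}"

definition R_lb_bar :: "nat \<Rightarrow> nat \<Rightarrow> (nat \<Rightarrow> real) \<Rightarrow> (nat \<Rightarrow> nat \<Rightarrow> real) \<Rightarrow> real" where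
  "R_lb_bar N K p a = (\<Sum>d\<in>demands N K. demand_prob p K d * R_lb K (distinct_demands K d) a)"

end

theory Submission
  imports Defs "HOL-Combinatorics.Permutations"
begin

text \<open>Let a n l be the fraction of the bits of file n cached by exactly l users, divided by
  K choose l; counting each bit once shows that this placement is feasible.
  For a demand, order its distinct files by a permutation \<pi> attaining R_lb and let u i be a
  user requesting \<pi> i. The users u 1, u 2, ... can decode one after the other, so every bit of
  file \<pi> i cached by none of u 1, ..., u i is determined by the broadcast, and the rate is at
  least the number of such bits. Averaging this bound over the K! relabellings of the users, a bit
  cached by l users is missed by the first i users in a fraction (K - i choose l) / (K choose l)
  of them, which is the coefficient in R_lb. Relabelling the users does not change the demand
  distribution, so averaging over the demands gives the theorem.\<close>

lemma permutes_exists_image_eq: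
  assumes "finite A" "T \<subseteq> A" "T' \<subseteq> A" "card T' = card T"
  obtains \<tau> where "\<tau> permutes A" "\<tau> ` T = T'"
proof -
  have fin: "finite T" "finite T'" using assms finite_subset by auto
  obtain f where f: "bij_betw f T T'" using finite_same_card_bij[OF fin] assms(4) by metis
  have "card (A - T) = card (A - T')" using assms fin by (simp add: card_Diff_subset)
  then obtain g where g: "bij_betw g (A - T) (A - T')"
    using finite_same_card_bij[of "A - T" "A - T'"] assms by auto
  define \<tau> where "\<tau> x = (if x \<in> T then f x else if x \<in> A then g x else x)" for x
  have "bij_betw \<tau> T T'" using f by (rule bij_betw_cong[THEN iffD1, rotated]) (simp add: \<tau>_def)
  moreover have "bij_betw \<tau> (A - T) (A - T')" using g
    by (rule bij_betw_cong[THEN iffD1, rotated]) (simp add: \<tau>_def)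
  ultimately have "bij_betw \<tau> (T \<union> (A - T)) (T' \<union> (A - T'))"
    by (intro bij_betw_combine) auto
  with assms have "bij_betw \<tau> A A" by (simp add: Un_absorb1 Un_Diff_cancel)
  hence "\<tau> permutes A" by (rule bij_imp_permutes) (use assms in \<open>auto simp: \<tau>_def\<close>)
  moreover have "\<tau> ` T = T'" using f by (auto simp: \<tau>_def bij_betw_def)
  ultimately show ?thesis by (rule that)
qed

lemma card_permutes_image_eq:
  assumes "finite A" "T \<subseteq> A" "T' \<subseteq> A" "card T' = card T"
  shows "card {\<sigma>. \<sigma> permutes A \<and> \<sigma> ` T = T'} = card {\<sigma>. \<sigma> permutes A \<and> \<sigma> ` T = T}"
proof -
  obtain \<tau> where \<tau>: "\<tau> permutes A" "\<tau> ` T = T'"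
    using permutes_exists_image_eq[OF assms] .
  have inv\<tau>: "inv \<tau> permutes A" "inv \<tau> ` T' = T"
    using \<tau> permutes_inv permutes_inj image_inv_f_f by fastforce+
  have "bij_betw ((\<circ>) \<tau>) {\<sigma>. \<sigma> permutes A \<and> \<sigma> ` T = T} {\<sigma>. \<sigma> permutes A \<and> \<sigma> ` T = T'}"
  proof (rule bij_betw_byWitness[where f' = "(\<circ>) (inv \<tau>)"])
    show "\<forall>\<sigma>\<in>{\<sigma>. \<sigma> permutes A \<and> \<sigma> ` T = T}. inv \<tau> \<circ> (\<tau> \<circ> \<sigma>) = \<sigma>"
      using permutes_inv_o(2)[OF \<tau>(1)] by (simp add: o_assoc)
    show "\<forall>\<sigma>\<in>{\<sigma>. \<sigma> permutes A \<and> \<sigma> ` T = T'}. \<tau> \<circ> (inv \<tau> \<circ> \<sigma>) = \<sigma>"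
      using permutes_inv_o(1)[OF \<tau>(1)] by (simp add: o_assoc)
    show "(\<circ>) \<tau> ` {\<sigma>. \<sigma> permutes A \<and> \<sigma> ` T = T} \<subseteq> {\<sigma>. \<sigma> permutes A \<and> \<sigma> ` T = T'}"
      using \<tau> by (intro image_subsetI) (metis (mono_tags) mem_Collect_eq permutes_compose image_comp)
    show "(\<circ>) (inv \<tau>) ` {\<sigma>. \<sigma> permutes A \<and> \<sigma> ` T = T'} \<subseteq> {\<sigma>. \<sigma> permutes A \<and> \<sigma> ` T = T}"
      using inv\<tau> by (intro image_subsetI) (metis (mono_tags) mem_Collect_eq permutes_compose image_comp)
  qed
  thus ?thesis by (simp add: bij_betw_same_card)
qed

lemma card_permutes_image_property:
  assumes "finite A" "T \<subseteq> A"
  shows "card {\<sigma>. \<sigma> permutes A \<and> Q (\<sigma> ` T)}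
     = card {T'. T' \<subseteq> A \<and> card T' = card T \<and> Q T'} * card {\<sigma>. \<sigma> permutes A \<and> \<sigma> ` T = T}"
proof -
  define fibre where "fibre T' = {\<sigma>. \<sigma> permutes A \<and> \<sigma> ` T = T'}" for T'
  define Ts where "Ts = {T'. T' \<subseteq> A \<and> card T' = card T \<and> Q T'}"
  have fin_fibre: "finite (fibre T')" for T'
    unfolding fibre_def using finite_permutations[OF assms(1)] by (rule finite_subset[rotated]) auto
  have fin_Ts: "finite Ts"
    unfolding Ts_def using assms(1) by (rule finite_subset[rotated, OF finite_Pow_iff[THEN iffD2]]) auto
  have image_T: "\<sigma> ` T \<subseteq> A \<and> card (\<sigma> ` T) = card T" if "\<sigma> permutes A" for \<sigma>
    using that assms permutes_image[OF that] permutes_inj[OF that]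
    by (auto simp: card_image inj_on_subset)
  have "{\<sigma>. \<sigma> permutes A \<and> Q (\<sigma> ` T)} = (\<Union>T'\<in>Ts. fibre T')"
    unfolding fibre_def Ts_def using image_T by auto
  moreover have "card (\<Union>T'\<in>Ts. fibre T') = (\<Sum>T'\<in>Ts. card (fibre T'))"
    using fin_Ts fin_fibre by (intro card_UN_disjoint) (auto simp: fibre_def)
  ultimately have "card {\<sigma>. \<sigma> permutes A \<and> Q (\<sigma> ` T)} = (\<Sum>T'\<in>Ts. card (fibre T'))"
    by simp
  also have "\<dots> = (\<Sum>T'\<in>Ts. card (fibre T))"
    using card_permutes_image_eq[OF assms] by (intro sum.cong) (auto simp: Ts_def fibre_def)
  finally show ?thesis by (simp add: Ts_def fibre_def)
qed

lemma card_permutes_image_disjoint: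
  assumes "finite A" "T \<subseteq> A" "U \<subseteq> A"
  shows "real (card {\<sigma>. \<sigma> permutes A \<and> \<sigma> ` T \<inter> U = {}})
       = fact (card A) * real ((card A - card U) choose card T) / real (card A choose card T)"
proof -
  define c where "c = card {\<sigma>. \<sigma> permutes A \<and> \<sigma> ` T = T}"
  have "fact (card A) = (card A choose card T) * c"
    using card_permutes_image_property[OF assms(1,2), of "\<lambda>_. True"] card_permutations[OF refl assms(1)]
      n_subsets[OF assms(1)] by (simp add: c_def)
  hence all: "fact (card A) = real (card A choose card T) * real c"
    by (metis of_nat_fact of_nat_mult)
  have "{T'. T' \<subseteq> A \<and> card T' = card T \<and> T' \<inter> U = {}} = {T'. T' \<subseteq> A - U \<and> card T' = card T}"
    by auto
  hence avoiding: "card {\<sigma>. \<sigma> permutes A \<and> \<sigma> ` T \<inter> U = {}} = ((card A - card U) choose card T) * c"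
    using card_permutes_image_property[OF assms(1,2), of "\<lambda>T'. T' \<inter> U = {}"] n_subsets[of "A - U" "card T"] assms
    by (simp add: c_def card_Diff_subset finite_subset)
  have "card T \<le> card A" using assms by (simp add: card_mono)
  hence "real (card A choose card T) > 0" by simp
  thus ?thesis using all avoiding by (simp add: field_simps)
qed

lemma sum_card_fibres:
  fixes g :: "nat \<Rightarrow> 'b::semiring_1"
  assumes "finite J" "finite \<Lambda>" "c ` J \<subseteq> \<Lambda>"
  shows "(\<Sum>l\<in>\<Lambda>. of_nat (card {j\<in>J. c j = l}) * g l) = (\<Sum>j\<in>J. g (c j))"
proof -
  have "(\<Sum>l\<in>\<Lambda>. of_nat (card {j\<in>J. c j = l}) * g l) = (\<Sum>l\<in>\<Lambda>. \<Sum>j\<in>{j\<in>J. c j = l}. g (c j))"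
    by (intro sum.cong) simp_all
  also have "\<dots> = (\<Sum>j\<in>J. g (c j))"
    using assms by (rule sum.group)
  finally show ?thesis .
qed

definition storing_users :: "(nat \<Rightarrow> (nat \<times> nat) set) \<Rightarrow> nat \<Rightarrow> nat \<Rightarrow> nat \<Rightarrow> nat set" where
  "storing_users S K n j = {k\<in>{1..K}. (n, j) \<in> S k}"

definition scheme_placement :: "(nat \<Rightarrow> (nat \<times> nat) set) \<Rightarrow> nat \<Rightarrow> nat \<Rightarrow> nat \<Rightarrow> nat \<Rightarrow> real" where
  "scheme_placement S K F n l =
     real (card {j\<in>{..<F}. card (storing_users S K n j) = l}) / (real F * real (K choose l))"

lemma storing_users_subset: "storing_users S K n j \<subseteq> {1..K}"
  unfolding storing_users_def by auto

lemma card_storing_users_le: "card (storing_users S K n j) \<le> K"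
  using card_mono[OF _ storing_users_subset] by simp

lemma sum_scheme_placement:
  assumes "F \<ge> 1"
  shows "real F * (\<Sum>l=0..K. w l * scheme_placement S K F n l)
       = (\<Sum>j<F. w (card (storing_users S K n j)) / real (K choose card (storing_users S K n j)))"
proof -
  have "real F * (\<Sum>l=0..K. w l * scheme_placement S K F n l)
      = (\<Sum>l=0..K. real (card {j\<in>{..<F}. card (storing_users S K n j) = l}) * (w l / real (K choose l)))"
    using assms by (simp add: sum_distrib_left scheme_placement_def field_split_simps)
  also have "\<dots> = (\<Sum>j<F. w (card (storing_users S K n j)) / real (K choose card (storing_users S K n j)))"
    by (rule sum_card_fibres) (auto simp: card_storing_users_le)
  finally show ?thesis .
qed

lemma sum_card_storing_users:
  assumes "\<forall>k\<in>{1..K}. S k \<subseteq> {1..N} \<times> {0..<F}"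
  shows "(\<Sum>n=1..N. \<Sum>j<F. card (storing_users S K n j)) = (\<Sum>k=1..K. card (S k))"
proof -
  have "(\<Sum>n=1..N. \<Sum>j<F. card (storing_users S K n j)) = (\<Sum>x\<in>{1..N} \<times> {..<F}. card {k\<in>{1..K}. x \<in> S k})"
    by (simp add: sum.cartesian_product storing_users_def case_prod_beta)
  also have "\<dots> = (\<Sum>k=1..K. card {x\<in>{1..N} \<times> {..<F}. x \<in> S k})"
    by (rule sum_multicount_gen) auto
  also have "\<dots> = (\<Sum>k=1..K. card (S k))"
    using assms by (intro sum.cong refl arg_cong[where f = card]) (auto simp: atLeast0LessThan)
  finally show ?thesis .
qed

lemma scheme_placement_cache_load:
  assumes "F \<ge> 1" "K \<ge> 1"
  shows "real F * real K * (\<Sum>l=1..K. real ((K - 1) choose (l - 1)) * scheme_placement S K F n l)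
       = (\<Sum>j<F. real (card (storing_users S K n j)))"
proof -
  have binomial_weight: "real ((K - 1) choose (l - 1)) = real l / real K * real (K choose l)"
    if "l \<ge> 1" for l
    using times_binomial_minus1_eq[of l K] that \<open>K \<ge> 1\<close>
    by (simp add: field_simps flip: of_nat_mult)
  have "(\<Sum>l=1..K. real ((K - 1) choose (l - 1)) * scheme_placement S K F n l)
      = (\<Sum>l=1..K. real l / real K * real (K choose l) * scheme_placement S K F n l)"
    by (intro sum.cong refl) (simp only: binomial_weight atLeastAtMost_iff)
  also have "\<dots> = (\<Sum>l=0..K. real l / real K * real (K choose l) * scheme_placement S K F n l)"
    by (simp add: sum.atLeast_Suc_atMost)
  finally have "real F * (\<Sum>l=1..K. real ((K - 1) choose (l - 1)) * scheme_placement S K F n l)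
      = real F * (\<Sum>l=0..K. real l / real K * real (K choose l) * scheme_placement S K F n l)"
    by simp
  also have "\<dots> = (\<Sum>j<F. real (card (storing_users S K n j)) / real K
      * real (K choose card (storing_users S K n j)) / real (K choose card (storing_users S K n j)))"
    by (rule sum_scheme_placement[OF \<open>F \<ge> 1\<close>])
  also have "\<dots> = (\<Sum>j<F. real (card (storing_users S K n j))) / real K"
    by (simp add: sum_divide_distrib not_less card_storing_users_le)
  finally show ?thesis using \<open>K \<ge> 1\<close> by (simp add: field_simps)
qed

lemma feasible_scheme_placement:
  assumes scheme: "uncoded_scheme N K M F S X L" and "F \<ge> 1" "K \<ge> 1"
  shows "feasible_placement N K M (scheme_placement S K F)"
proof -
  define a where "a = scheme_placement S K F"
  have F_pos: "real F > 0" using \<open>F \<ge> 1\<close> by simp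
  have caches: "\<forall>k\<in>{1..K}. S k \<subseteq> {1..N} \<times> {0..<F} \<and> real (card (S k)) \<le> M * real F"
    using scheme unfolding uncoded_scheme_def by blast
  have total: "(\<Sum>l=0..K. real (K choose l) * a n l) = 1" for n
  proof -
    have "real F * (\<Sum>l=0..K. real (K choose l) * a n l) = (\<Sum>j<F. 1)"
      unfolding a_def sum_scheme_placement[OF \<open>F \<ge> 1\<close>]
      by (intro sum.cong refl) (simp add: not_less card_storing_users_le)
    with F_pos show ?thesis by simp
  qed
  have "real F * real K * (\<Sum>n=1..N. \<Sum>l=1..K. real ((K - 1) choose (l - 1)) * a n l)
      = (\<Sum>n=1..N. \<Sum>j<F. real (card (storing_users S K n j)))"
    unfolding a_def
    by (rule trans[OF sum_distrib_left]) (simp only: scheme_placement_cache_load[OF assms(2,3)])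
  also have "\<dots> = real (\<Sum>k=1..K. card (S k))"
    using caches sum_card_storing_users by (simp flip: of_nat_sum)
  also have "\<dots> \<le> (\<Sum>k=1..K. M * real F)"
    unfolding of_nat_sum using caches by (intro sum_mono) auto
  finally have "(\<Sum>n=1..N. \<Sum>l=1..K. real ((K - 1) choose (l - 1)) * a n l) \<le> M"
    using F_pos \<open>K \<ge> 1\<close> by (simp add: field_simps)
  moreover have "a n l \<ge> 0" for n l
    unfolding a_def scheme_placement_def by simp
  ultimately show ?thesis
    using total unfolding feasible_placement_def a_def by blast
qed

lemma demands_comp_permutes:
  assumes "d \<in> demands N K" "\<sigma> permutes {1..K}"
  shows "d \<circ> \<sigma> \<in> demands N K"
  using assms permutes_in_image[OF assms(2)] permutes_not_in[OF assms(2)]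
  unfolding demands_def by auto

lemma uncoded_scheme_decode_eq:
  assumes "uncoded_scheme N K M F S X L" "d \<in> demands N K" "k \<in> {1..K}"
    and "W \<in> file_space N F" "W' \<in> file_space N F"
    and "X d W = X d W'" "cache_content (S k) W = cache_content (S k) W'" "j < F"
  shows "W (d k) j = W' (d k) j"
proof -
  obtain g where "\<forall>W\<in>file_space N F. g (X d W) (cache_content (S k) W) = map (W (d k)) [0..<F]"
    using assms(1-3) unfolding uncoded_scheme_def by blast
  hence "map (W (d k)) [0..<F] = map (W' (d k)) [0..<F]"
    using assms(4-7) by metis
  thus ?thesis using \<open>j < F\<close> by (simp add: map_eq_conv)
qed

lemma card_le_length_if_inj_on_Pow:
  fixes f :: "'a set \<Rightarrow> bool list"
  assumes "finite B" "inj_on f (Pow B)" "\<forall>E\<in>Pow B. length (f E) = L"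
  shows "card B \<le> L"
proof -
  have "2 ^ card B = card (f ` Pow B)"
    using assms by (simp add: card_image card_Pow)
  also have "\<dots> \<le> card {xs :: bool list. set xs \<subseteq> UNIV \<and> length xs = L}"
    using assms(3) by (intro card_mono finite_lists_length_eq) auto
  also have "\<dots> = 2 ^ L"
    using card_lists_length_eq[of "UNIV :: bool set" L] by simp
  finally show ?thesis by simp
qed

lemma file_indicator_in_file_space:
  assumes "E \<subseteq> {1..N} \<times> {..<F}"
  shows "(\<lambda>n j. (n, j) \<in> E) \<in> file_space N F"
  using assms unfolding file_space_def by auto

definition missed_bits :: "(nat \<Rightarrow> (nat \<times> nat) set) \<Rightarrow> nat \<Rightarrow> (nat \<Rightarrow> nat) \<Rightarrow> (nat \<Rightarrow> nat) \<Rightarrow> nat \<Rightarrow> nat set" where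
  "missed_bits S F d u i = {j\<in>{..<F}. \<forall>k\<in>u ` {1..i}. (d (u i), j) \<notin> S k}"

lemma missed_bits_subset:
  assumes "d \<in> demands N K" "u ` {1..m} \<subseteq> {1..K}"
  shows "(\<Union>i\<in>{1..m}. Pair (d (u i)) ` missed_bits S F d u i) \<subseteq> {1..N} \<times> {..<F}"
  using assms unfolding missed_bits_def demands_def by fastforce

text \<open>Users u 1, u 2, ... decode in this order: the bits in the cache of u i that are not known
  in advance are missed bits of earlier users.\<close>

lemma uncoded_scheme_successive_decoding:
  fixes u :: "nat \<Rightarrow> nat" and m :: nat
  assumes scheme: "uncoded_scheme N K M F S X L" and d: "d \<in> demands N K"
    and u: "u ` {1..m} \<subseteq> {1..K}"
  defines "B \<equiv> \<Union>i\<in>{1..m}. Pair (d (u i)) ` missed_bits S F d u i"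
  assumes E1: "E1 \<subseteq> B" and E2: "E2 \<subseteq> B"
    and same_broadcast: "X d (\<lambda>n j. (n, j) \<in> E1) = X d (\<lambda>n j. (n, j) \<in> E2)"
    and "i \<in> {1..m}" "j < F"
  shows "(d (u i), j) \<in> E1 \<longleftrightarrow> (d (u i), j) \<in> E2"
  using \<open>i \<in> {1..m}\<close> \<open>j < F\<close>
proof (induction i arbitrary: j rule: less_induct)
  case (less i)
  have "x \<in> E1 \<longleftrightarrow> x \<in> E2" if "x \<in> S (u i)" for x
  proof (cases "x \<in> B")
    case True
    then obtain i' j' where i': "i' \<in> {1..m}" "j' < F" "x = (d (u i'), j')"
      and missed: "\<forall>k\<in>u ` {1..i'}. x \<notin> S k"
      unfolding B_def missed_bits_def by auto
    have "i' < i"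
      using missed \<open>x \<in> S (u i)\<close> less.prems(1) by (metis atLeastAtMost_iff image_eqI not_le)
    with less.IH i' show ?thesis by simp
  next
    case False
    with E1 E2 show ?thesis by auto
  qed
  hence same_cache: "cache_content (S (u i)) (\<lambda>n j. (n, j) \<in> E1) = cache_content (S (u i)) (\<lambda>n j. (n, j) \<in> E2)"
    unfolding cache_content_def by (auto simp: fun_eq_iff)
  have files: "(\<lambda>n j. (n, j) \<in> E) \<in> file_space N F" if "E \<subseteq> B" for E
    using that missed_bits_subset[OF d u] unfolding B_def
    by (intro file_indicator_in_file_space) (rule subset_trans)
  have "u i \<in> {1..K}" using u less.prems(1) by blast
  have "(\<lambda>n j. (n, j) \<in> E1) (d (u i)) j = (\<lambda>n j. (n, j) \<in> E2) (d (u i)) j"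
    using files[OF E1] files[OF E2] same_broadcast same_cache less.prems(2)
    by (rule uncoded_scheme_decode_eq[OF scheme d \<open>u i \<in> {1..K}\<close>])
  thus ?case by simp
qed

lemma uncoded_scheme_inj_on_missed_bits:
  fixes u :: "nat \<Rightarrow> nat" and m :: nat
  assumes scheme: "uncoded_scheme N K M F S X L" and d: "d \<in> demands N K"
    and u: "u ` {1..m} \<subseteq> {1..K}"
  defines "B \<equiv> \<Union>i\<in>{1..m}. Pair (d (u i)) ` missed_bits S F d u i"
  shows "inj_on (\<lambda>E. X d (\<lambda>n j. (n, j) \<in> E)) (Pow B)"
proof (rule inj_onI, unfold Pow_iff)
  fix E1 E2 assume E1: "E1 \<subseteq> B" and E2: "E2 \<subseteq> B"
    and same_broadcast: "X d (\<lambda>n j. (n, j) \<in> E1) = X d (\<lambda>n j. (n, j) \<in> E2)"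
  show "E1 = E2"
  proof (intro set_eqI)
    fix x
    show "x \<in> E1 \<longleftrightarrow> x \<in> E2"
    proof (cases "x \<in> B")
      case True
      then obtain i j where ij: "i \<in> {1..m}" "j < F" and x: "x = (d (u i), j)"
        unfolding B_def missed_bits_def by auto
      have "(d (u i), j) \<in> E1 \<longleftrightarrow> (d (u i), j) \<in> E2"
        using E1 E2 same_broadcast ij unfolding B_def
        by (rule uncoded_scheme_successive_decoding[OF scheme d u])
      with x show ?thesis by simp
    next
      case False
      with E1 E2 show ?thesis by auto
    qed
  qed
qed

lemma uncoded_scheme_cut_set_bound:
  fixes u :: "nat \<Rightarrow> nat" and m :: nat
  assumes scheme: "uncoded_scheme N K M F S X L" and d: "d \<in> demands N K"
    and u: "u ` {1..m} \<subseteq> {1..K}" and distinct_files: "inj_on (\<lambda>i. d (u i)) {1..m}"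
  shows "(\<Sum>i=1..m. card (missed_bits S F d u i)) \<le> L d"
proof -
  define B where "B = (\<Union>i\<in>{1..m}. Pair (d (u i)) ` missed_bits S F d u i)"
  have "card B = (\<Sum>i=1..m. card (Pair (d (u i)) ` missed_bits S F d u i))"
    unfolding B_def using distinct_files
    by (intro card_UN_disjoint) (auto simp: missed_bits_def dest: inj_onD)
  also have "\<dots> = (\<Sum>i=1..m. card (missed_bits S F d u i))"
    by (intro sum.cong refl card_image) (simp add: inj_on_def)
  finally have "card B = (\<Sum>i=1..m. card (missed_bits S F d u i))" .
  moreover have "card B \<le> L d"
  proof (rule card_le_length_if_inj_on_Pow)
    show "finite B" unfolding B_def missed_bits_def by auto
    show "inj_on (\<lambda>E. X d (\<lambda>n j. (n, j) \<in> E)) (Pow B)"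
      using scheme d u unfolding B_def by (rule uncoded_scheme_inj_on_missed_bits)
    have "\<forall>W\<in>file_space N F. length (X d W) = L d"
      using scheme d unfolding uncoded_scheme_def by blast
    moreover have "(\<lambda>n j. (n, j) \<in> E) \<in> file_space N F" if "E \<subseteq> B" for E
      using that missed_bits_subset[OF d u] unfolding B_def
      by (intro file_indicator_in_file_space) (rule subset_trans)
    ultimately show "\<forall>E\<in>Pow B. length (X d (\<lambda>n j. (n, j) \<in> E)) = L d"
      by blast
  qed
  ultimately show ?thesis by simp
qed

lemma uncoded_scheme_cut_set_bound_permuted:
  fixes u :: "nat \<Rightarrow> nat" and m :: nat
  assumes scheme: "uncoded_scheme N K M F S X L" and d: "d \<in> demands N K"
    and \<sigma>: "\<sigma> permutes {1..K}"
    and u: "u ` {1..m} \<subseteq> {1..K}" and distinct_files: "inj_on (\<lambda>i. d (u i)) {1..m}"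
  shows "(\<Sum>i=1..m. card {j\<in>{..<F}. \<sigma> ` storing_users S K (d (u i)) j \<inter> u ` {1..i} = {}})
       \<le> L (d \<circ> \<sigma>)"
proof -
  define v where "v = inv \<sigma> \<circ> u"
  have dv: "(d \<circ> \<sigma>) (v i) = d (u i)" for i
    unfolding v_def by (simp add: permutes_inverses(1)[OF \<sigma>])
  have v: "v ` {1..m} \<subseteq> {1..K}"
    unfolding v_def using u permutes_in_image[OF permutes_inv[OF \<sigma>]] by auto
  have image_iff_inv: "x \<in> \<sigma> ` T \<longleftrightarrow> inv \<sigma> x \<in> T" for x T
    using bij_image_Collect_eq[OF permutes_bij[OF \<sigma>], of "\<lambda>x. x \<in> T"] by simp
  have "inj_on (\<lambda>i. (d \<circ> \<sigma>) (v i)) {1..m}"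
    using distinct_files by (simp only: dv)
  with scheme demands_comp_permutes[OF d \<sigma>] v
  have "(\<Sum>i=1..m. card (missed_bits S F (d \<circ> \<sigma>) v i)) \<le> L (d \<circ> \<sigma>)"
    by (rule uncoded_scheme_cut_set_bound)
  moreover have missed_eq: "missed_bits S F (d \<circ> \<sigma>) v i
      = {j\<in>{..<F}. \<sigma> ` storing_users S K (d (u i)) j \<inter> u ` {1..i} = {}}" if "i \<in> {1..m}" for i
  proof -
    have v_image: "v ` {1..i} = inv \<sigma> ` u ` {1..i}"
      by (simp add: v_def image_comp)
    have "v ` {1..i} \<subseteq> {1..K}"
      using v \<open>i \<in> {1..m}\<close> by auto
    hence "inv \<sigma> x \<in> {1..K}" if "x \<in> u ` {1..i}" for x
      using that unfolding v_image by blast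
    moreover have "\<sigma> ` storing_users S K (d (u i)) j \<inter> u ` {1..i} = {}
        \<longleftrightarrow> (\<forall>x\<in>u ` {1..i}. inv \<sigma> x \<notin> storing_users S K (d (u i)) j)" for j
      by (simp only: disjoint_iff image_iff_inv) blast
    ultimately show ?thesis
      unfolding missed_bits_def dv v_image storing_users_def by auto
  qed
  moreover have "(\<Sum>i=1..m. card (missed_bits S F (d \<circ> \<sigma>) v i))
      = (\<Sum>i=1..m. card {j\<in>{..<F}. \<sigma> ` storing_users S K (d (u i)) j \<inter> u ` {1..i} = {}})"
    using missed_eq by (intro sum.cong refl) simp
  ultimately show ?thesis by simp
qed

lemma R_lb_attained:
  assumes "finite D"
  obtains \<pi> where "bij_betw \<pi> {1..card D} D"
    and "R_lb K D a = (\<Sum>l=0..K-1. \<Sum>i=1..card D. real ((K - i) choose l) * a (\<pi> i) l)"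
proof -
  define f where "f \<pi> = (\<Sum>l=0..K-1. \<Sum>i=1..card D. real ((K - i) choose l) * a (\<pi> i) l)"
    for \<pi> :: "nat \<Rightarrow> nat"
  define candidates where "candidates = {f \<pi> | \<pi>. bij_betw \<pi> {1..card D} D}"
  have "candidates \<subseteq> f ` ({1..card D} \<rightarrow>\<^sub>E D)"
  proof
    fix v assume "v \<in> candidates"
    then obtain \<pi> where \<pi>: "bij_betw \<pi> {1..card D} D" "v = f \<pi>"
      unfolding candidates_def by blast
    have "f (restrict \<pi> {1..card D}) = f \<pi>"
      unfolding f_def by (intro sum.cong refl) simp
    moreover have "restrict \<pi> {1..card D} \<in> {1..card D} \<rightarrow>\<^sub>E D"
      using \<pi>(1) by (auto simp: bij_betw_def)
    ultimately show "v \<in> f ` ({1..card D} \<rightarrow>\<^sub>E D)"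
      using \<pi>(2) by (metis image_eqI)
  qed
  hence "finite candidates"
    by (rule finite_subset) (intro finite_imageI finite_PiE assms, simp)
  moreover have "candidates \<noteq> {}"
    using ex_bij_betw_nat_finite_1[OF assms] unfolding candidates_def by blast
  ultimately have "Max candidates \<in> candidates"
    by (rule Max_in)
  then obtain \<pi> where \<pi>: "bij_betw \<pi> {1..card D} D" and "Max candidates = f \<pi>"
    unfolding candidates_def by blast
  moreover have "R_lb K D a = Max candidates"
    unfolding R_lb_def candidates_def f_def ..
  ultimately have "R_lb K D a = f \<pi>"
    by simp
  with \<pi> show ?thesis
    unfolding f_def by (rule that)
qed

lemma R_lb_attained_by_users:
  obtains u where "u ` {1..card (distinct_demands K d)} \<subseteq> {1..K}"
    and "inj_on (\<lambda>i. d (u i)) {1..card (distinct_demands K d)}"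
    and "R_lb K (distinct_demands K d) a
       = (\<Sum>i=1..card (distinct_demands K d). \<Sum>l=0..K-1. real ((K - i) choose l) * a (d (u i)) l)"
proof -
  define D where "D = distinct_demands K d"
  have "finite D" unfolding D_def distinct_demands_def by simp
  then obtain \<pi> where \<pi>: "bij_betw \<pi> {1..card D} D"
    and R_lb: "R_lb K D a = (\<Sum>l=0..K-1. \<Sum>i=1..card D. real ((K - i) choose l) * a (\<pi> i) l)"
    by (rule R_lb_attained)
  have "\<forall>i\<in>{1..card D}. \<exists>k. k \<in> {1..K} \<and> \<pi> i = d k"
    using \<pi> unfolding D_def distinct_demands_def bij_betw_def by blast
  then obtain u where u: "\<forall>i\<in>{1..card D}. u i \<in> {1..K} \<and> \<pi> i = d (u i)"
    by (auto dest!: bchoice)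
  have "inj_on \<pi> {1..card D}" using \<pi> by (simp add: bij_betw_def)
  moreover have "inj_on \<pi> {1..card D} = inj_on (\<lambda>i. d (u i)) {1..card D}"
    using u by (intro inj_on_cong) simp
  moreover have "R_lb K D a = (\<Sum>l=0..K-1. \<Sum>i=1..card D. real ((K - i) choose l) * a (d (u i)) l)"
    unfolding R_lb using u by (intro sum.cong refl) simp
  hence "R_lb K D a = (\<Sum>i=1..card D. \<Sum>l=0..K-1. real ((K - i) choose l) * a (d (u i)) l)"
    by (rule trans[OF _ sum.swap])
  moreover have "u ` {1..card D} \<subseteq> {1..K}" using u by auto
  ultimately show ?thesis
    using that unfolding D_def by simp
qed

lemma sum_scheme_placement_binomial:
  assumes "F \<ge> 1" "1 \<le> i" "i \<le> K"
  shows "real F * (\<Sum>l=0..K-1. real ((K - i) choose l) * scheme_placement S K F n l)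
       = (\<Sum>j<F. real ((K - i) choose card (storing_users S K n j))
           / real (K choose card (storing_users S K n j)))"
proof -
  have "(\<Sum>l=0..K-1. real ((K - i) choose l) * scheme_placement S K F n l)
      = (\<Sum>l=0..K. real ((K - i) choose l) * scheme_placement S K F n l)"
    using assms(2,3) by (cases K) (simp_all add: atLeast0_atMost_Suc)
  thus ?thesis using sum_scheme_placement[OF \<open>F \<ge> 1\<close>] by simp
qed

lemma card_permutes_storing_users_disjoint:
  assumes "U \<subseteq> {1..K}"
  shows "real (card {\<sigma>. \<sigma> permutes {1..K} \<and> \<sigma> ` storing_users S K n j \<inter> U = {}})
       = fact K * real ((K - card U) choose card (storing_users S K n j))
           / real (K choose card (storing_users S K n j))"
  using card_permutes_image_disjoint[OF _ storing_users_subset assms] by simp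

lemma sum_scheme_placement_eq_sum_permutes:
  fixes u f :: "nat \<Rightarrow> nat"
  assumes "F \<ge> 1" and inj_u: "inj_on u {1..m}" and u_range: "u ` {1..m} \<subseteq> {1..K}"
  shows "fact K * real F * (\<Sum>i=1..m. \<Sum>l=0..K-1. real ((K - i) choose l) * scheme_placement S K F (f i) l)
       = (\<Sum>\<sigma> | \<sigma> permutes {1..K}.
            real (\<Sum>i=1..m. card {j\<in>{..<F}. \<sigma> ` storing_users S K (f i) j \<inter> u ` {1..i} = {}}))"
proof -
  define Perms where "Perms = {\<sigma>. \<sigma> permutes {1..K}}"
  have "m \<le> K"
    using card_mono[OF _ u_range] card_image[OF inj_u] by simp
  have avoiding: "real (card {\<sigma>\<in>Perms. \<sigma> ` storing_users S K (f i) j \<inter> u ` {1..i} = {}})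
      = fact K * real ((K - i) choose card (storing_users S K (f i) j))
          / real (K choose card (storing_users S K (f i) j))" if "i \<in> {1..m}" for i j
  proof -
    have "u ` {1..i} \<subseteq> {1..K}" using u_range that by auto
    moreover have "card (u ` {1..i}) = i"
      using that by (subst card_image) (auto intro: inj_on_subset[OF inj_u])
    ultimately show ?thesis
      using card_permutes_storing_users_disjoint unfolding Perms_def by simp
  qed
  have swap_count: "(\<Sum>j<F. card {\<sigma>\<in>Perms. Q \<sigma> j}) = (\<Sum>\<sigma>\<in>Perms. card {j\<in>{..<F}. Q \<sigma> j})" for Q
    unfolding Perms_def by (intro sum_multicount_gen) (auto simp: finite_permutations)
  have "fact K * real F * (\<Sum>i=1..m. \<Sum>l=0..K-1. real ((K - i) choose l) * scheme_placement S K F (f i) l)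
      = (\<Sum>i=1..m. fact K * (real F * (\<Sum>l=0..K-1. real ((K - i) choose l) * scheme_placement S K F (f i) l)))"
    by (simp add: sum_distrib_left mult.assoc)
  also have "\<dots> = (\<Sum>i=1..m. \<Sum>j<F. fact K * real ((K - i) choose card (storing_users S K (f i) j))
          / real (K choose card (storing_users S K (f i) j)))"
    using \<open>m \<le> K\<close>
    by (intro sum.cong refl, subst sum_scheme_placement_binomial[OF \<open>F \<ge> 1\<close>]) (auto simp: sum_distrib_left)
  also have "\<dots> = (\<Sum>i=1..m. \<Sum>j<F. real (card {\<sigma>\<in>Perms. \<sigma> ` storing_users S K (f i) j \<inter> u ` {1..i} = {}}))"
    using avoiding by simp
  also have "\<dots> = (\<Sum>i=1..m. \<Sum>\<sigma>\<in>Perms. real (card {j\<in>{..<F}. \<sigma> ` storing_users S K (f i) j \<inter> u ` {1..i} = {}}))"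
    by (simp add: swap_count flip: of_nat_sum)
  also have "\<dots> = (\<Sum>\<sigma>\<in>Perms. real (\<Sum>i=1..m. card {j\<in>{..<F}. \<sigma> ` storing_users S K (f i) j \<inter> u ` {1..i} = {}}))"
    by (subst sum.swap) simp
  finally show ?thesis
    unfolding Perms_def .
qed

lemma R_lb_scheme_placement_le:
  assumes scheme: "uncoded_scheme N K M F S X L" and "F \<ge> 1" and d: "d \<in> demands N K"
  shows "fact K * real F * R_lb K (distinct_demands K d) (scheme_placement S K F)
       \<le> (\<Sum>\<sigma> | \<sigma> permutes {1..K}. real (L (d \<circ> \<sigma>)))"
proof -
  define m where "m = card (distinct_demands K d)"
  obtain u where u_range: "u ` {1..m} \<subseteq> {1..K}" and distinct_files: "inj_on (\<lambda>i. d (u i)) {1..m}"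
    and R_lb: "R_lb K (distinct_demands K d) (scheme_placement S K F)
      = (\<Sum>i=1..m. \<Sum>l=0..K-1. real ((K - i) choose l) * scheme_placement S K F (d (u i)) l)"
    unfolding m_def by (rule R_lb_attained_by_users)
  have "inj_on u {1..m}"
    using distinct_files by (rule inj_on_imageI2[of d u, unfolded comp_def])
  from \<open>F \<ge> 1\<close> this u_range
  have "fact K * real F * R_lb K (distinct_demands K d) (scheme_placement S K F)
      = (\<Sum>\<sigma> | \<sigma> permutes {1..K}.
           real (\<Sum>i=1..m. card {j\<in>{..<F}. \<sigma> ` storing_users S K (d (u i)) j \<inter> u ` {1..i} = {}}))"
    unfolding R_lb by (rule sum_scheme_placement_eq_sum_permutes)
  also have "\<dots> \<le> (\<Sum>\<sigma> | \<sigma> permutes {1..K}. real (L (d \<circ> \<sigma>)))"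
  proof (rule sum_mono)
    fix \<sigma> assume "\<sigma> \<in> {\<sigma>. \<sigma> permutes {1..K}}"
    with scheme d
    have "(\<Sum>i=1..m. card {j\<in>{..<F}. \<sigma> ` storing_users S K (d (u i)) j \<inter> u ` {1..i} = {}}) \<le> L (d \<circ> \<sigma>)"
      using u_range distinct_files by (intro uncoded_scheme_cut_set_bound_permuted) simp_all
    thus "real (\<Sum>i=1..m. card {j\<in>{..<F}. \<sigma> ` storing_users S K (d (u i)) j \<inter> u ` {1..i} = {}})
        \<le> real (L (d \<circ> \<sigma>))" unfolding of_nat_le_iff .
  qed
  finally show ?thesis .
qed

lemma demand_prob_nonneg:
  assumes "\<forall>n\<in>{1..N}. p n \<ge> 0" "d \<in> demands N K"
  shows "demand_prob p K d \<ge> 0"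
  using assms unfolding demand_prob_def demands_def by (intro prod_nonneg) auto

lemma sum_demands_comp_permutes:
  assumes \<sigma>: "\<sigma> permutes {1..K}"
  shows "(\<Sum>d\<in>demands N K. demand_prob p K d * g (d \<circ> \<sigma>)) = (\<Sum>d\<in>demands N K. demand_prob p K d * g d)"
proof (rule sum.reindex_bij_witness[where j = "\<lambda>d. d \<circ> \<sigma>" and i = "\<lambda>d. d \<circ> inv \<sigma>"])
  have inv: "inv \<sigma> permutes {1..K}" using permutes_inv[OF \<sigma>] .
  fix d assume d: "d \<in> demands N K"
  show "d \<circ> \<sigma> \<circ> inv \<sigma> = d" "d \<circ> inv \<sigma> \<circ> \<sigma> = d"
    by (simp_all add: o_assoc[symmetric] permutes_inv_o[OF \<sigma>])
  show "d \<circ> \<sigma> \<in> demands N K" "d \<circ> inv \<sigma> \<in> demands N K"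
    using demands_comp_permutes[OF d] \<sigma> inv by blast+
  have "demand_prob p K d = prod ((\<lambda>i. p (d i)) \<circ> \<sigma>) {1..K}"
    unfolding demand_prob_def by (rule prod.permute[OF \<sigma>])
  thus "demand_prob p K (d \<circ> \<sigma>) * g (d \<circ> \<sigma>) = demand_prob p K d * g (d \<circ> \<sigma>)"
    unfolding demand_prob_def by (simp add: comp_def)
qed

theorem lemma1:
  fixes N K F :: nat and M :: real and p :: "nat \<Rightarrow> real"
    and S :: "nat \<Rightarrow> (nat \<times> nat) set"
    and X :: "(nat \<Rightarrow> nat) \<Rightarrow> (nat \<Rightarrow> nat \<Rightarrow> bool) \<Rightarrow> bool list"
    and L :: "(nat \<Rightarrow> nat) \<Rightarrow> nat"
  assumes "N \<ge> 1" and "K \<ge> 2" and "0 \<le> M" and "M \<le> real N"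
    and "\<forall>n\<in>{1..N}. p n \<ge> 0" and "(\<Sum>n=1..N. p n) = 1"
    and "\<forall>i\<in>{1..N}. \<forall>j\<in>{1..N}. i \<le> j \<longrightarrow> p j \<le> p i"
    and "F \<ge> 1"
    and "uncoded_scheme N K M F S X L"
  shows "\<exists>a. feasible_placement N K M a \<and> R_lb_bar N K p a \<le> avg_rate N K p F L"
proof (intro exI conjI)
  note scheme = assms(9)
  define a where "a = scheme_placement S K F"
  define Perms where "Perms = {\<sigma>. \<sigma> permutes {1..K}}"
  define P where "P = demand_prob p K"
  show "feasible_placement N K M a"
    unfolding a_def using scheme \<open>F \<ge> 1\<close> \<open>K \<ge> 2\<close> by (intro feasible_scheme_placement) auto
  have "fact K * real F * R_lb_bar N K p a
      = (\<Sum>d\<in>demands N K. P d * (fact K * real F * R_lb K (distinct_demands K d) a))"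
    unfolding R_lb_bar_def P_def by (simp add: sum_distrib_left mult_ac)
  also have "\<dots> \<le> (\<Sum>d\<in>demands N K. P d * (\<Sum>\<sigma>\<in>Perms. real (L (d \<circ> \<sigma>))))"
    using R_lb_scheme_placement_le[OF scheme \<open>F \<ge> 1\<close>] demand_prob_nonneg[OF assms(5)]
    unfolding a_def P_def Perms_def by (intro sum_mono mult_left_mono) auto
  also have "\<dots> = (\<Sum>\<sigma>\<in>Perms. \<Sum>d\<in>demands N K. P d * real (L (d \<circ> \<sigma>)))"
    by (simp add: sum_distrib_left sum.swap[of _ Perms])
  also have "\<dots> = (\<Sum>\<sigma>\<in>Perms. \<Sum>d\<in>demands N K. P d * real (L d))"
    unfolding P_def Perms_def by (intro sum.cong refl sum_demands_comp_permutes) simp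
  also have "\<dots> = fact K * real F * avg_rate N K p F L"
    using \<open>F \<ge> 1\<close> unfolding avg_rate_def P_def Perms_def
    by (simp add: card_permutations sum_distrib_left)
  finally show "R_lb_bar N K p a \<le> avg_rate N K p F L"
    using \<open>F \<ge> 1\<close> by (simp add: mult_le_cancel_left_pos)
qed

end
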